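(* Let $1\le p\le 2$ and let $p'$ be the conjugate exponent, $1/p+1/p'=1$. Fix $N\ge 1$. Suppose that for every complex block matrix $S=\begin{pmatrix} S_1 & \cdots & S_N\\ R_1&\cdots&R_N\end{pmatrix}$ partitioned into $2\times N$ blocks one has $\|S\|_p\ge \|\mathcal C_p(S)\|_p$. Then for every complex block matrix $T=\begin{pmatrix} A_1 & \cdots & A_N\\ B_1&\cdots&B_N\end{pmatrix}$ partitioned into $2\times N$ blocks one has $\|T\|_{p'}\le \|\mathcal C_{p'}(T)\|_{p'}$.
   Context: For a matrix $X$ and $r\ge1$, $\|X\|_r=(\operatorname{Tr}|X|^r)^{1/r}$ is the Schatten $r$-norm, $|X|=(X^*X)^{1/2}$. A $2\times N$ partitioned block matrix has blocks $A_k$ (first block row) and $B_k$ (second block row), where all blocks in a block row have the same number of rows and all blocks in a block column have the same number of columns. Its Schatten $r$-norm compression is the $2\times N$ real matrix $\mathcal C_r(T)=\begin{pmatrix} \|A_1\|_r & \cdots & \|A_N\|_r\\ \|B_1\|_r&\cdots&\|B_N\|_r\end{pmatrix}$. *)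

theory Defs
  imports "Jordan_Normal_Form.Char_Poly" "HOL-Library.Extended_Real"
begin

definition adj :: "complex mat \<Rightarrow> complex mat" where
  "adj X = mat (dim_col X) (dim_row X) (\<lambda>(i,j). cnj (X $$ (j,i)))"

definition sq_sing_vals :: "complex mat \<Rightarrow> complex multiset" where
  "sq_sing_vals X = proots (char_poly (adj X * X))"

definition schatten :: "ereal \<Rightarrow> complex mat \<Rightarrow> real" where
  "schatten r X = (case r of
       ereal s \<Rightarrow> (\<Sum>\<^sub># (image_mset (\<lambda>e. sqrt (Re e) powr s) (sq_sing_vals X))) powr (1 / s)
     | PInfty \<Rightarrow> Max (insert 0 ((\<lambda>e. sqrt (Re e)) ` set_mset (sq_sing_vals X)))
     | MInfty \<Rightarrow> 0)"

definition offs :: "(nat \<Rightarrow> nat) \<Rightarrow> nat \<Rightarrow> nat" where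
  "offs w k = (\<Sum>i<k. w i)"

definition blk :: "complex mat \<Rightarrow> nat \<Rightarrow> nat \<Rightarrow> nat \<Rightarrow> nat \<Rightarrow> complex mat" where
  "blk X r0 h c0 c = mat h c (\<lambda>(i,j). X $$ (r0 + i, c0 + j))"

text \<open>A (m1+m2) x (sum of widths) matrix viewed as a 2 x N block matrix with block row
  heights m1, m2 and block column widths w 0, ..., w (N-1). Block (0,k) is A_k,
  block (1,k) is B_k.\<close>
definition block2 :: "complex mat \<Rightarrow> nat \<Rightarrow> nat \<Rightarrow> (nat \<Rightarrow> nat) \<Rightarrow> nat \<Rightarrow> nat \<Rightarrow> complex mat" where
  "block2 X m1 m2 w i k =
     (if i = 0 then blk X 0 m1 (offs w k) (w k) else blk X m1 m2 (offs w k) (w k))"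

text \<open>Schatten r-norm compression: the 2 x N real matrix of block norms
  (embedded into complex matrices so that its Schatten norm can be taken).\<close>
definition compr :: "ereal \<Rightarrow> nat \<Rightarrow> complex mat \<Rightarrow> nat \<Rightarrow> nat \<Rightarrow> (nat \<Rightarrow> nat) \<Rightarrow> complex mat" where
  "compr r N X m1 m2 w =
     mat 2 N (\<lambda>(i,k). complex_of_real (schatten r (block2 X m1 m2 w i k)))"

definition is_block2 :: "nat \<Rightarrow> complex mat \<Rightarrow> nat \<Rightarrow> nat \<Rightarrow> (nat \<Rightarrow> nat) \<Rightarrow> bool" where
  "is_block2 N X m1 m2 w \<longleftrightarrow> m1 \<ge> 1 \<and> m2 \<ge> 1 \<and> (\<forall>k<N. w k \<ge> 1) \<and>
     dim_row X = m1 + m2 \<and> dim_col X = (\<Sum>k<N. w k)"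

end

theory Submission
  imports Defs "HOL-Analysis.Convex"
begin

text \<open>
  Write \<open>q\<close> for the conjugate exponent of \<open>p\<close>. By trace duality there is a matrix \<open>S\<close> of the
  shape of \<open>T\<close> with \<open>\<parallel>S\<parallel>\<^sub>p \<le> 1\<close> and \<open>|tr (S\<^sup>* T)| = \<parallel>T\<parallel>\<^sub>q\<close>; it is obtained from a singular
  value decomposition of \<open>T\<close> by replacing each singular value \<open>\<sigma>\<close> with a multiple of \<open>\<sigma>\<^sup>q\<^sup>-\<^sup>1\<close>.
  The trace splits into the sum of \<open>tr (S\<^sub>i\<^sub>k\<^sup>* T\<^sub>i\<^sub>k)\<close> over the blocks. Holder's inequality
  for Schatten norms, applied once to every pair of blocks and once more to the two
  \<open>2 \<times> N\<close> compressions, gives \<open>\<parallel>T\<parallel>\<^sub>q \<le> \<parallel>C\<^sub>p(S)\<parallel>\<^sub>p \<parallel>C\<^sub>q(T)\<parallel>\<^sub>q\<close>, and the hypothesis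
  bounds \<open>\<parallel>C\<^sub>p(S)\<parallel>\<^sub>p\<close> by \<open>\<parallel>S\<parallel>\<^sub>p \<le> 1\<close>.

  Holder's inequality itself is reduced, through unitaries that make the columns of \<open>X\<close>
  and of \<open>Y\<close> orthogonal, to a scalar inequality for a doubly stochastic matrix built from
  the unitary relating the two bases; this is where \<open>p \<le> 2\<close> enters, as it makes
  \<open>t \<mapsto> t\<^sup>q\<^sup>/\<^sup>2\<close> convex.
\<close>

section \<open>Conjugate transpose and unitary matrices\<close>

lemma adj_carrier [simp]: "adj X \<in> carrier_mat (dim_col X) (dim_row X)"
  by (simp add: adj_def)

lemma dim_adj [simp]: "dim_row (adj X) = dim_col X" "dim_col (adj X) = dim_row X"
  by (simp_all add: adj_def)

lemma index_adj [simp]: "i < dim_col X \<Longrightarrow> j < dim_row X \<Longrightarrow> adj X $$ (i,j) = cnj (X $$ (j,i))"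
  by (simp add: adj_def)

lemma adj_carrierI: "X \<in> carrier_mat m n \<Longrightarrow> adj X \<in> carrier_mat n m"
  unfolding carrier_mat_def by simp

lemma adj_adj [simp]: "adj (adj X) = X"
  by (rule eq_matI) simp_all

lemma index_mult_mat_sum:
  "A \<in> carrier_mat m k \<Longrightarrow> B \<in> carrier_mat k n \<Longrightarrow> i < m \<Longrightarrow> j < n \<Longrightarrow>
   (A * B) $$ (i,j) = (\<Sum>c<k. A $$ (i,c) * B $$ (c,j))"
  by (auto simp: scalar_prod_def atLeast0LessThan)

lemma adj_mult:
  assumes A: "A \<in> carrier_mat m k" and B: "B \<in> carrier_mat k n"
  shows "adj (A * B) = adj B * adj A"
proof (rule eq_matI)
  fix i j assume "i < dim_row (adj B * adj A)" "j < dim_col (adj B * adj A)"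
  then have i: "i < n" and j: "j < m" using A B by auto
  have "adj (A * B) $$ (i,j) = cnj ((A * B) $$ (j,i))"
    using A B i j by simp
  also have "\<dots> = (\<Sum>c<k. cnj (A $$ (j,c)) * cnj (B $$ (c,i)))"
    by (simp add: index_mult_mat_sum[OF A B j i] del: index_mult_mat)
  also have "\<dots> = (adj B * adj A) $$ (i,j)"
    using A B i j by (simp add: index_mult_mat_sum[of _ n k _ m] adj_carrierI mult.commute del: index_mult_mat)
  finally show "adj (A * B) $$ (i,j) = (adj B * adj A) $$ (i,j)" .
qed auto

lemma index_adj_mult_mult:
  assumes "U \<in> carrier_mat k n1" "A \<in> carrier_mat k l" "V \<in> carrier_mat l n2" "i < n1" "j < n2"
  shows "(adj U * A * V) $$ (i,j) = (\<Sum>a<k. \<Sum>b<l. cnj (U $$ (a,i)) * A $$ (a,b) * V $$ (b,j))"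
proof -
  have "(adj U * A * V) $$ (i,j) = (\<Sum>b<l. (adj U * A) $$ (i,b) * V $$ (b,j))"
    using assms by (intro index_mult_mat_sum[of _ n1 l _ n2]) (auto intro: adj_carrierI)
  also have "\<dots> = (\<Sum>b<l. (\<Sum>a<k. cnj (U $$ (a,i)) * A $$ (a,b)) * V $$ (b,j))"
    using assms by (intro sum.cong refl)
      (simp add: index_mult_mat_sum[of _ n1 k _ l] adj_carrierI del: index_mult_mat)
  finally have "(adj U * A * V) $$ (i,j) = \<dots>" .
  then show ?thesis
    by (simp add: sum_distrib_right sum.swap[of _ "{..<l}"])
qed

lemma gram_mult_right:
  assumes X: "X \<in> carrier_mat m n" and V: "V \<in> carrier_mat n n"
  shows "adj (X * V) * (X * V) = adj V * (adj X * X) * V"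
proof -
  have "adj (X * V) * (X * V) = adj V * adj X * (X * V)" by (simp add: adj_mult[OF X V])
  also have "\<dots> = adj V * (adj X * (X * V))"
    using X V by (intro assoc_mult_mat[of _ n n _ m _ n]) (auto intro: adj_carrierI)
  also have "adj X * (X * V) = adj X * X * V"
    using X V by (intro assoc_mult_mat[of _ n m _ n _ n, symmetric]) (auto intro: adj_carrierI)
  also have "adj V * (adj X * X * V) = adj V * (adj X * X) * V"
    using X V by (intro assoc_mult_mat[of _ n n _ n _ n, symmetric]) (auto intro: adj_carrierI)
  finally show ?thesis .
qed

lemma hermitian_adj_mult_mult:
  assumes U: "U \<in> carrier_mat n n" and A: "A \<in> carrier_mat n n" and "adj A = A"
  shows "adj (adj U * A * U) = adj U * A * U"
proof -
  have "adj (adj U * A * U) = adj U * adj (adj U * A)"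
    using assms by (intro adj_mult[of _ n n _ n]) (auto intro: adj_carrierI)
  also have "adj (adj U * A) = A * U"
    using assms adj_mult[of "adj U" n n A n] by (simp add: adj_carrierI)
  finally show ?thesis using assms by (simp add: assoc_mult_mat[of _ n n _ n _ n] adj_carrierI)
qed

lemma adj_mult_conj:
  assumes W: "W \<in> carrier_mat n n" and M: "M \<in> carrier_mat n n" and A: "A \<in> carrier_mat n n"
  shows "adj (W * M) * A * (W * M) = adj M * (adj W * A * W) * M"
proof -
  have aW: "adj W \<in> carrier_mat n n" and aM: "adj M \<in> carrier_mat n n"
    using W M by (auto intro: adj_carrierI)
  have "adj (W * M) * A * (W * M) = adj M * adj W * A * (W * M)" by (simp add: adj_mult[OF W M])
  also have "\<dots> = adj M * (adj W * A * W) * M"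
    using aM aW A W M by (simp add: assoc_mult_mat[of _ n n _ n _ n])
  finally show ?thesis .
qed

definition unitary :: "nat \<Rightarrow> complex mat \<Rightarrow> bool" where
  "unitary n U \<longleftrightarrow> U \<in> carrier_mat n n \<and> adj U * U = 1\<^sub>m n \<and> U * adj U = 1\<^sub>m n"

lemma unitaryD:
  assumes "unitary n U"
  shows "U \<in> carrier_mat n n" "adj U * U = 1\<^sub>m n" "U * adj U = 1\<^sub>m n"
  using assms by (simp_all add: unitary_def)

lemma unitaryI:
  assumes "U \<in> carrier_mat n n" "adj U * U = 1\<^sub>m n"
  shows "unitary n U"
  using assms mat_mult_left_right_inverse[of "adj U" n U] by (simp add: unitary_def adj_carrierI)

lemma unitary_one: "unitary n (1\<^sub>m n)"
  by (rule unitaryI) auto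

lemma unitary_adj: "unitary n U \<Longrightarrow> unitary n (adj U)"
  by (simp add: unitary_def adj_carrierI)

lemma unitary_mult:
  assumes U: "unitary n U" and V: "unitary n V"
  shows "unitary n (U * V)"
proof (rule unitaryI)
  note UV = unitaryD[OF U] unitaryD[OF V]
  show "U * V \<in> carrier_mat n n" using UV by auto
  have "adj (U * V) * (U * V) = adj V * (adj U * U) * V"
    by (rule gram_mult_right[OF UV(1) UV(4)])
  then show "adj (U * V) * (U * V) = 1\<^sub>m n" using UV by simp
qed

lemma unitary_cols_orthonormal:
  assumes "unitary n U" "i < n" "j < n"
  shows "(\<Sum>a<n. cnj (U $$ (a,i)) * U $$ (a,j)) = (if i = j then 1 else 0)"
  using arg_cong[OF unitaryD(2)[OF assms(1)], of "\<lambda>A. A $$ (i,j)"] unitaryD(1)[OF assms(1)] assms(2,3)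
  by (simp add: index_mult_mat_sum[of _ n n _ n] adj_carrierI del: index_mult_mat)

lemma unitary_rows_orthonormal:
  assumes "unitary n U" "a < n" "b < n"
  shows "(\<Sum>i<n. U $$ (a,i) * cnj (U $$ (b,i))) = (if a = b then 1 else 0)"
  using arg_cong[OF unitaryD(3)[OF assms(1)], of "\<lambda>A. A $$ (a,b)"] unitaryD(1)[OF assms(1)] assms(2,3)
  by (simp add: index_mult_mat_sum[of _ n n _ n] adj_carrierI del: index_mult_mat)

section \<open>Unitary diagonalization of Hermitian matrices\<close>

lemma householder_unitary:
  fixes z :: "nat \<Rightarrow> complex"
  shows "unitary m (mat m m (\<lambda>(a,b). (if a = b then 1 else 0) - 2 * z a * cnj (z b) / (\<Sum>c<m. z c * cnj (z c))))"
    (is "unitary m ?H")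
proof (rule unitaryI)
  define N where "N = (\<Sum>c<m. z c * cnj (z c))"
  have "cnj N = N"
    unfolding N_def by (simp add: mult.commute)
  then have "adj ?H = ?H"
    by (intro eq_matI) (auto simp: N_def[symmetric] mult.commute)
  moreover have "?H * ?H = 1\<^sub>m m"
  proof (rule eq_matI)
    fix a c assume "a < dim_row (1\<^sub>m m)" "c < dim_col (1\<^sub>m m)"
    then have a: "a < m" and c: "c < m" by auto
    let ?x = "\<lambda>a b. 2 * z a * cnj (z b) / N"
    have "(?H * ?H) $$ (a,c) = (\<Sum>b<m. ((if a = b then 1 else 0) - ?x a b) * ((if b = c then 1 else 0) - ?x b c))"
      using a c by (simp add: index_mult_mat_sum[of _ m m _ m] N_def del: index_mult_mat)
    also have "\<dots> = (\<Sum>b<m. (if a = b then 1 else 0) * (if b = c then 1 else 0))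
        - (\<Sum>b<m. (if a = b then 1 else 0) * ?x b c) - (\<Sum>b<m. ?x a b * (if b = c then 1 else 0))
        + (\<Sum>b<m. ?x a b * ?x b c)"
      by (simp add: algebra_simps sum.distrib sum_subtractf)
    also have "\<dots> = (if a = c then 1 else 0) - 2 * ?x a c + (\<Sum>b<m. ?x a b * ?x b c)"
    proof -
      have d1: "(\<Sum>b<m. (if a = b then 1 else 0) * f b) = f a" for f :: "nat \<Rightarrow> complex"
        using a by (simp add: if_distrib[of "\<lambda>x. x * _"] cong: if_cong)
      have d2: "(\<Sum>b<m. f b * (if b = c then 1 else 0)) = f c" for f :: "nat \<Rightarrow> complex"
        using c by (simp add: if_distrib[of "\<lambda>x. _ * x"] cong: if_cong)
      show ?thesis unfolding d1 d2 by simp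
    qed
    also have "(\<Sum>b<m. ?x a b * ?x b c) = 4 * z a * cnj (z c) * N / (N * N)"
      by (simp add: N_def sum_distrib_left sum_divide_distrib algebra_simps)
    also have "\<dots> = 2 * ?x a c"
      by (cases "N = 0") (simp_all add: field_simps)
    finally show "(?H * ?H) $$ (a,c) = 1\<^sub>m m $$ (a,c)" using a c by simp
  qed auto
  ultimately show "adj ?H * ?H = 1\<^sub>m m" by simp
qed auto

lemma exists_phase:
  fixes z :: complex
  obtains \<alpha> where "cnj \<alpha> * \<alpha> = 1" "cnj \<alpha> * z = complex_of_real (cmod z)"
proof
  define \<alpha> where "\<alpha> = (if z = 0 then 1 else z / complex_of_real (cmod z))"
  show "cnj \<alpha> * \<alpha> = 1" and "cnj \<alpha> * z = complex_of_real (cmod z)"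
    unfolding \<alpha>_def by (auto simp: complex_norm_square[symmetric] power2_eq_square mult.commute[of "cnj z"])
qed

lemma sum_cnj_mult_eq_0D:
  fixes z :: "nat \<Rightarrow> complex"
  assumes "(\<Sum>a<m. z a * cnj (z a)) = 0" "a < m"
  shows "z a = 0"
proof -
  have "complex_of_real (\<Sum>a<m. (cmod (z a))^2) = (\<Sum>a<m. z a * cnj (z a))"
    unfolding of_real_sum complex_norm_square ..
  then have "(\<Sum>a<m. (cmod (z a))^2) = 0" using assms(1) by (metis of_real_eq_0_iff)
  then show ?thesis using assms(2) by (simp add: sum_nonneg_eq_0_iff)
qed

lemma unitary_with_first_column:
  fixes u :: "nat \<Rightarrow> complex"
  assumes m: "0 < m" and u1: "(\<Sum>a<m. u a * cnj (u a)) = 1"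
  obtains W c where "unitary m W" "\<And>a. a < m \<Longrightarrow> W $$ (a,0) = c * u a"
proof -
  define r where "r = cmod (u 0)"
  obtain \<alpha> where \<alpha>1: "cnj \<alpha> * \<alpha> = 1" and \<alpha>u: "cnj \<alpha> * u 0 = complex_of_real r"
    unfolding r_def by (rule exists_phase)
  have \<alpha>u': "\<alpha> * cnj (u 0) = complex_of_real r"
    using arg_cong[OF \<alpha>u, of cnj] by (simp add: mult.commute)
  txt \<open>The reflection in the hyperplane orthogonal to \<open>u - \<alpha> e\<^sub>0\<close> swaps \<open>u\<close> and \<open>\<alpha> e\<^sub>0\<close>.\<close>
  define z where "z a = u a - (if a = 0 then \<alpha> else 0)" for a
  define N where "N = (\<Sum>a<m. z a * cnj (z a))"
  define W where "W = mat m m (\<lambda>(a,b). (if a = b then 1 else 0) - 2 * z a * cnj (z b) / N)"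
  have unit: "unitary m W"
    unfolding W_def N_def by (rule householder_unitary)
  have N: "N = 2 - 2 * complex_of_real r"
  proof -
    have "z a * cnj (z a) = u a * cnj (u a)
        - (if a = 0 then \<alpha> * cnj (u 0) + cnj \<alpha> * u 0 - \<alpha> * cnj \<alpha> else 0)" for a
      unfolding z_def by (cases "a = 0") (simp_all add: algebra_simps)
    then have "N = 1 - (\<alpha> * cnj (u 0) + cnj \<alpha> * u 0 - \<alpha> * cnj \<alpha>)"
      using m u1 by (simp add: N_def sum_subtractf)
    then show ?thesis using \<alpha>u \<alpha>u' \<alpha>1 by (simp add: mult.commute)
  qed
  have "W $$ (a,0) = cnj \<alpha> * u a" if a: "a < m" for a
  proof (cases "r = 1")
    case True
    then have "N = 0" and "z a = 0"
      using N a sum_cnj_mult_eq_0D[of z m a] by (simp_all add: N_def)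
    then show ?thesis using a m \<alpha>1 by (auto simp: W_def z_def)
  next
    case False
    have "cnj (u 0) = cnj \<alpha> * complex_of_real r"
      using \<alpha>u' \<alpha>1 by (metis mult.assoc mult.left_neutral)
    then have "cnj (z 0) = cnj \<alpha> * (complex_of_real r - 1)"
      unfolding z_def by (simp add: algebra_simps)
    then have "2 * z a * cnj (z 0) / N = 2 * z a * (cnj \<alpha> * (complex_of_real r - 1)) / (2 - 2 * complex_of_real r)"
      by (simp only: N)
    also have "\<dots> = - (z a * cnj \<alpha>)"
      using False by (simp add: field_simps)
    finally have "W $$ (a,0) = (if a = 0 then 1 else 0) + z a * cnj \<alpha>"
      using a m by (simp add: W_def)
    then show ?thesis using \<alpha>1 by (cases "a = 0") (simp_all add: z_def algebra_simps)
  qed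
  then show thesis using that[OF unit] by blast
qed

lemma exists_unit_eigenvector:
  assumes A: "A \<in> carrier_mat n n" and n: "0 < n"
  obtains e u where "(\<Sum>a<n. u a * cnj (u a)) = 1"
    "\<And>a. a < n \<Longrightarrow> (\<Sum>b<n. A $$ (a,b) * u b) = e * u a"
proof -
  have "degree (char_poly A) = n" using degree_monic_char_poly[OF A] by simp
  then have "\<not> constant (poly (char_poly A))" using n by (simp add: constant_degree)
  then obtain e where "poly (char_poly A) e = 0" using fundamental_theorem_of_algebra by blast
  then have "eigenvalue A e" using eigenvalue_root_char_poly[OF A] by simp
  then obtain v where "eigenvector A v e" unfolding eigenvalue_def by blast
  then have v: "v \<in> carrier_vec n" and v0: "v \<noteq> 0\<^sub>v n" and Av: "A *\<^sub>v v = e \<cdot>\<^sub>v v"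
    using A unfolding eigenvector_def by auto
  define nr where "nr = (\<Sum>a<n. (cmod (v $ a))^2)"
  obtain a0 where a0: "a0 < n" "v $ a0 \<noteq> 0"
    using v v0 by (metis eq_vecI carrier_vecD index_zero_vec)
  have "0 < (cmod (v $ a0))^2" using a0 by simp
  also have "\<dots> \<le> nr" unfolding nr_def using a0 by (intro member_le_sum) auto
  finally have nr0: "0 < nr" .
  define u where "u a = v $ a / complex_of_real (sqrt nr)" for a
  have "(\<Sum>a<n. u a * cnj (u a)) = (\<Sum>a<n. v $ a * cnj (v $ a)) / complex_of_real nr"
    unfolding u_def sum_divide_distrib using nr0 by (simp add: field_simps flip: of_real_mult)
  also have "(\<Sum>a<n. v $ a * cnj (v $ a)) = complex_of_real nr"
    unfolding nr_def of_real_sum complex_norm_square ..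
  also have "complex_of_real nr / complex_of_real nr = 1" using nr0 by simp
  finally have "(\<Sum>a<n. u a * cnj (u a)) = 1" .
  moreover have "(\<Sum>b<n. A $$ (a,b) * u b) = e * u a" if a: "a < n" for a
  proof -
    have "(\<Sum>b<n. A $$ (a,b) * v $ b) = (A *\<^sub>v v) $ a"
      using a A v by (simp add: scalar_prod_def atLeast0LessThan)
    then show ?thesis
      using Av a v by (simp add: u_def sum_divide_distrib[symmetric])
  qed
  ultimately show thesis by (rule that)
qed

lemma hermitian_deflation:
  assumes A: "A \<in> carrier_mat (Suc n) (Suc n)" and hA: "adj A = A"
  obtains W where "unitary (Suc n) W"
    "\<And>i. 0 < i \<Longrightarrow> i < Suc n \<Longrightarrow> (adj W * A * W) $$ (i,0) = 0"
    "\<And>j. 0 < j \<Longrightarrow> j < Suc n \<Longrightarrow> (adj W * A * W) $$ (0,j) = 0"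
proof -
  obtain e u where u1: "(\<Sum>a<Suc n. u a * cnj (u a)) = 1"
    and Au: "\<And>a. a < Suc n \<Longrightarrow> (\<Sum>b<Suc n. A $$ (a,b) * u b) = e * u a"
    using exists_unit_eigenvector[OF A] by blast
  obtain W c where W: "unitary (Suc n) W" and Wcol: "\<And>a. a < Suc n \<Longrightarrow> W $$ (a,0) = c * u a"
    using unitary_with_first_column[OF _ u1] by blast
  note Wc = unitaryD(1)[OF W]
  define B where "B = adj W * A * W"
  have B0: "B $$ (i,0) = 0" if i: "0 < i" "i < Suc n" for i
  proof -
    have "B $$ (i,0) = (\<Sum>a<Suc n. \<Sum>b<Suc n. cnj (W $$ (a,i)) * A $$ (a,b) * (c * u b))"
      unfolding B_def using i Wc A
      by (simp add: index_adj_mult_mult[OF Wc A Wc] Wcol del: index_mult_mat sum.lessThan_Suc)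
    also have "\<dots> = (\<Sum>a<Suc n. cnj (W $$ (a,i)) * c * (\<Sum>b<Suc n. A $$ (a,b) * u b))"
      by (simp add: sum_distrib_left algebra_simps del: sum.lessThan_Suc)
    also have "\<dots> = (\<Sum>a<Suc n. cnj (W $$ (a,i)) * c * (e * u a))"
      by (intro sum.cong refl) (simp add: Au del: sum.lessThan_Suc)
    also have "\<dots> = c * e * (\<Sum>a<Suc n. cnj (W $$ (a,i)) * u a)"
      by (simp add: sum_distrib_left algebra_simps del: sum.lessThan_Suc)
    also have "\<dots> = e * (\<Sum>a<Suc n. cnj (W $$ (a,i)) * W $$ (a,0))"
      by (simp add: Wcol sum_distrib_left algebra_simps del: sum.lessThan_Suc)
    also have "\<dots> = 0" using unitary_cols_orthonormal[OF W, of i 0] i by simp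
    finally show ?thesis .
  qed
  have "B $$ (0,j) = 0" if j: "0 < j" "j < Suc n" for j
  proof -
    have "B $$ (0,j) = adj B $$ (0,j)"
      unfolding B_def using hermitian_adj_mult_mult[OF Wc A hA] by simp
    also have "\<dots> = cnj (B $$ (j,0))" using Wc A j by (simp add: B_def)
    finally show ?thesis using B0[OF j] by simp
  qed
  with W B0 show thesis unfolding B_def by (rule that)
qed

definition one_dsum :: "complex mat \<Rightarrow> complex mat" where
  "one_dsum U = mat (Suc (dim_row U)) (Suc (dim_col U))
     (\<lambda>(i,j). if i = 0 \<or> j = 0 then (if i = j then 1 else 0) else U $$ (i - 1, j - 1))"

lemma one_dsum_carrier: "U \<in> carrier_mat n n \<Longrightarrow> one_dsum U \<in> carrier_mat (Suc n) (Suc n)"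
  by (simp add: one_dsum_def)

lemma index_one_dsum [simp]:
  "one_dsum U $$ (0,0) = 1"
  "j < dim_col U \<Longrightarrow> one_dsum U $$ (0, Suc j) = 0"
  "i < dim_row U \<Longrightarrow> one_dsum U $$ (Suc i, 0) = 0"
  "i < dim_row U \<Longrightarrow> j < dim_col U \<Longrightarrow> one_dsum U $$ (Suc i, Suc j) = U $$ (i,j)"
  by (simp_all add: one_dsum_def)

lemma unitary_one_dsum:
  assumes U: "unitary n U"
  shows "unitary (Suc n) (one_dsum U)"
proof (rule unitaryI[OF one_dsum_carrier[OF unitaryD(1)[OF U]]], rule eq_matI)
  note Uc = unitaryD(1)[OF U]
  let ?M = "one_dsum U"
  fix i j assume "i < dim_row (1\<^sub>m (Suc n))" "j < dim_col (1\<^sub>m (Suc n))"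
  then have ij: "i < Suc n" "j < Suc n" by auto
  have "(adj ?M * ?M) $$ (i,j) = (\<Sum>a<Suc n. cnj (?M $$ (a,i)) * ?M $$ (a,j))"
    using ij one_dsum_carrier[OF Uc]
    by (simp add: index_mult_mat_sum[of _ "Suc n" "Suc n" _ "Suc n"] adj_carrierI del: index_mult_mat)
  also have "\<dots> = cnj (?M $$ (0,i)) * ?M $$ (0,j) + (\<Sum>a<n. cnj (?M $$ (Suc a,i)) * ?M $$ (Suc a,j))"
    by (rule sum.lessThan_Suc_shift)
  also have "\<dots> = 1\<^sub>m (Suc n) $$ (i,j)"
    using ij Uc unitary_cols_orthonormal[OF U, of "i - 1" "j - 1"] by (cases i; cases j) simp_all
  finally show "(adj ?M * ?M) $$ (i,j) = 1\<^sub>m (Suc n) $$ (i,j)" .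
qed (use unitaryD(1)[OF U] in \<open>simp_all add: one_dsum_def\<close>)

lemma diagonal_one_dsum_conj:
  assumes B: "B \<in> carrier_mat (Suc n) (Suc n)" and U: "U \<in> carrier_mat n n"
    and B0: "\<And>i. 0 < i \<Longrightarrow> i < Suc n \<Longrightarrow> B $$ (i,0) = 0"
    and B0': "\<And>j. 0 < j \<Longrightarrow> j < Suc n \<Longrightarrow> B $$ (0,j) = 0"
    and D: "diagonal_mat (adj U * mat n n (\<lambda>(i,j). B $$ (Suc i, Suc j)) * U)"
  shows "diagonal_mat (adj (one_dsum U) * B * one_dsum U)"
  unfolding diagonal_mat_def
proof (intro allI impI)
  let ?M = "one_dsum U" and ?B' = "mat n n (\<lambda>(i,j). B $$ (Suc i, Suc j))"
  have M: "?M \<in> carrier_mat (Suc n) (Suc n)" using U by (rule one_dsum_carrier)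
  fix i j assume "i < dim_row (adj ?M * B * ?M)" "j < dim_col (adj ?M * B * ?M)" "i \<noteq> j"
  then have ij: "i < Suc n" "j < Suc n" "i \<noteq> j" using M by auto
  have e: "(adj ?M * B * ?M) $$ (i,j) = (\<Sum>a<Suc n. \<Sum>b<Suc n. cnj (?M $$ (a,i)) * B $$ (a,b) * ?M $$ (b,j))"
    by (rule index_adj_mult_mult[OF M B M ij(1,2)])
  show "(adj ?M * B * ?M) $$ (i,j) = 0"
  proof (cases i)
    case 0
    then obtain j' where j: "j = Suc j'" "j' < n" using ij by (cases j) auto
    then show ?thesis
      unfolding e using 0 U by (simp del: sum.lessThan_Suc add: sum.lessThan_Suc_shift B0')
  next
    case (Suc i')
    show ?thesis
    proof (cases j)
      case 0
      then show ?thesis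
        unfolding e using Suc ij U by (simp del: sum.lessThan_Suc add: sum.lessThan_Suc_shift B0)
    next
      case (Suc j')
      have "(adj ?M * B * ?M) $$ (i,j) = (\<Sum>a<n. \<Sum>b<n. cnj (U $$ (a,i')) * ?B' $$ (a,b) * U $$ (b,j'))"
        unfolding e using Suc \<open>i = Suc i'\<close> ij U by (simp del: sum.lessThan_Suc add: sum.lessThan_Suc_shift)
      also have "\<dots> = (adj U * ?B' * U) $$ (i',j')"
        using \<open>i = Suc i'\<close> Suc ij U by (intro index_adj_mult_mult[symmetric]) auto
      also have "\<dots> = 0" using D \<open>i = Suc i'\<close> Suc ij U unfolding diagonal_mat_def by auto
      finally show ?thesis .
    qed
  qed
qed

theorem hermitian_unitarily_diagonalizable:
  assumes "A \<in> carrier_mat n n" "adj A = A"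
  shows "\<exists>U. unitary n U \<and> diagonal_mat (adj U * A * U)"
  using assms
proof (induction n arbitrary: A)
  case 0
  then show ?case by (intro exI[of _ "1\<^sub>m 0"]) (auto simp: unitary_one diagonal_mat_def)
next
  case (Suc n)
  obtain W where W: "unitary (Suc n) W"
    and B0: "\<And>i. 0 < i \<Longrightarrow> i < Suc n \<Longrightarrow> (adj W * A * W) $$ (i,0) = 0"
    and B0': "\<And>j. 0 < j \<Longrightarrow> j < Suc n \<Longrightarrow> (adj W * A * W) $$ (0,j) = 0"
    using hermitian_deflation[OF Suc.prems] by blast
  note Wc = unitaryD(1)[OF W]
  define B where "B = adj W * A * W"
  have B: "B \<in> carrier_mat (Suc n) (Suc n)" using Wc Suc.prems(1) by (auto simp: B_def adj_carrierI)
  have hB: "adj B = B" unfolding B_def by (rule hermitian_adj_mult_mult[OF Wc Suc.prems])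
  define B' where "B' = mat n n (\<lambda>(i,j). B $$ (Suc i, Suc j))"
  have "adj B' = B'"
  proof (rule eq_matI)
    fix i j assume "i < dim_row B'" "j < dim_col B'"
    then show "adj B' $$ (i,j) = B' $$ (i,j)"
      using B arg_cong[OF hB, of "\<lambda>X. X $$ (Suc i, Suc j)"] by (simp add: B'_def)
  qed (simp_all add: B'_def)
  then obtain U where U: "unitary n U" and D: "diagonal_mat (adj U * B' * U)"
    using Suc.IH[of B'] by (auto simp: B'_def)
  note Uc = unitaryD(1)[OF U]
  have "diagonal_mat (adj (one_dsum U) * B * one_dsum U)"
    using diagonal_one_dsum_conj[OF B Uc] B0 B0' D unfolding B_def B'_def by blast
  moreover have "adj (W * one_dsum U) * A * (W * one_dsum U) = adj (one_dsum U) * B * one_dsum U"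
    unfolding B_def by (rule adj_mult_conj[OF Wc one_dsum_carrier[OF Uc] Suc.prems(1)])
  ultimately show ?case
    using unitary_mult[OF W unitary_one_dsum[OF U]] by (intro exI[of _ "W * one_dsum U"]) simp
qed

section \<open>Singular values through orthogonal columns\<close>

definition col_norm :: "complex mat \<Rightarrow> nat \<Rightarrow> real" where
  "col_norm Y i = sqrt (\<Sum>a<dim_row Y. (cmod (Y $$ (a,i)))^2)"

lemma col_norm_nonneg: "0 \<le> col_norm Y i"
  by (simp add: col_norm_def sum_nonneg)

lemma sum_col_cnj_mult:
  assumes "dim_row Y = m"
  shows "(\<Sum>a<m. cnj (Y $$ (a,i)) * Y $$ (a,i)) = complex_of_real ((col_norm Y i)^2)"
proof -
  have "(col_norm Y i)^2 = (\<Sum>a<m. (cmod (Y $$ (a,i)))^2)"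
    using assms by (simp add: col_norm_def sum_nonneg)
  then show ?thesis by (simp only: of_real_sum complex_norm_square mult.commute)
qed

lemma index_gram_diag:
  assumes "Y \<in> carrier_mat m n" "i < n"
  shows "(adj Y * Y) $$ (i,i) = complex_of_real ((col_norm Y i)^2)"
  using assms by (simp add: sum_col_cnj_mult[of _ m] index_mult_mat_sum[of _ n m _ n] adj_carrierI
      del: index_mult_mat)

lemma exists_unitary_orthogonal_cols:
  assumes X: "X \<in> carrier_mat m n"
  shows "\<exists>V. unitary n V \<and> diagonal_mat (adj (X * V) * (X * V))"
proof -
  have "adj X * X \<in> carrier_mat n n" using X by (auto intro: adj_carrierI)
  moreover have "adj (adj X * X) = adj X * X" using adj_mult[OF adj_carrierI[OF X] X] by simp
  ultimately obtain V where "unitary n V" "diagonal_mat (adj V * (adj X * X) * V)"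
    using hermitian_unitarily_diagonalizable by blast
  then show ?thesis using gram_mult_right[OF X unitaryD(1)] by metis
qed

lemma proots_prod_linear: "proots (\<Prod>a\<leftarrow>xs. [:- a, 1:]) = mset (xs :: complex list)"
proof (induction xs)
  case (Cons a xs)
  have "(\<Prod>a\<leftarrow>xs. [:- a, 1:]) \<noteq> 0" by auto
  then show ?case
    using Cons by (simp only: list.map prod_list.Cons, subst proots_mult) auto
qed simp

lemma sq_sing_vals_col_norms:
  assumes X: "X \<in> carrier_mat m n" and V: "unitary n V" and D: "diagonal_mat (adj (X * V) * (X * V))"
  shows "sq_sing_vals X = mset (map (\<lambda>i. complex_of_real ((col_norm (X * V) i)^2)) [0..<n])"
proof -
  note Vc = unitaryD(1)[OF V]
  define G where "G = adj (X * V) * (X * V)"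
  define A where "A = adj X * X"
  have A: "A \<in> carrier_mat n n" using X by (auto simp: A_def intro: adj_carrierI)
  have G: "G = adj V * A * V" unfolding G_def A_def by (rule gram_mult_right[OF X Vc])
  have Gc: "G \<in> carrier_mat n n" using A Vc by (auto simp: G intro: adj_carrierI)
  have "similar_mat_wit G A (adj V) V"
    unfolding similar_mat_wit_def Let_def using A Gc Vc unitaryD[OF V] G
    by (auto simp: adj_carrierI)
  then have "similar_mat G A" unfolding similar_mat_def by blast
  moreover have "upper_triangular G"
    using D Gc unfolding G_def upper_triangular_def diagonal_mat_def by auto
  ultimately have "char_poly A = (\<Prod>a\<leftarrow>diag_mat G. [:- a, 1:])"
    using char_poly_similar char_poly_upper_triangular[OF Gc] by metis
  then have "sq_sing_vals X = mset (diag_mat G)"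
    by (simp add: sq_sing_vals_def A_def proots_prod_linear)
  also have "diag_mat G = map (\<lambda>i. complex_of_real ((col_norm (X * V) i)^2)) [0..<n]"
    unfolding diag_mat_def G_def using Gc index_gram_diag[of "X * V" m n] X Vc by (auto simp: G_def)
  finally show ?thesis .
qed

lemma schatten_col_norms:
  assumes "X \<in> carrier_mat m n" "unitary n V" "diagonal_mat (adj (X * V) * (X * V))"
  shows "schatten (ereal s) X = (\<Sum>i<n. col_norm (X * V) i powr s) powr (1/s)"
    and "schatten \<infinity> X = Max (insert 0 (col_norm (X * V) ` {..<n}))"
proof -
  have sv: "sq_sing_vals X = image_mset (\<lambda>i. complex_of_real ((col_norm (X * V) i)^2)) (mset [0..<n])"
    using sq_sing_vals_col_norms[OF assms] by simp
  have "image_mset (\<lambda>e. sqrt (Re e) powr s) (sq_sing_vals X) = image_mset (\<lambda>i. col_norm (X * V) i powr s) (mset [0..<n])"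
    unfolding sv multiset.map_comp by (rule image_mset_cong) (simp add: col_norm_nonneg)
  then show "schatten (ereal s) X = (\<Sum>i<n. col_norm (X * V) i powr s) powr (1/s)"
    by (simp add: schatten_def atLeast0LessThan flip: sum_unfold_sum_mset)
  have "(\<lambda>e. sqrt (Re e)) ` set_mset (sq_sing_vals X) = col_norm (X * V) ` {..<n}"
    unfolding sv by (auto simp: col_norm_nonneg image_image atLeast0LessThan)
  then show "schatten \<infinity> X = Max (insert 0 (col_norm (X * V) ` {..<n}))"
    by (simp add: schatten_def)
qed

lemma holder_inequality_sum:
  fixes a b :: "'i \<Rightarrow> real"
  assumes I: "finite I" and a: "\<And>i. i \<in> I \<Longrightarrow> 0 \<le> a i" and b: "\<And>i. i \<in> I \<Longrightarrow> 0 \<le> b i"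
    and p: "1 < p" and q: "1 < q" and pq: "1/p + 1/q = 1"
  shows "(\<Sum>i\<in>I. a i * b i) \<le> (\<Sum>i\<in>I. a i powr p) powr (1/p) * (\<Sum>i\<in>I. b i powr q) powr (1/q)"
proof -
  define A where "A = (\<Sum>i\<in>I. a i powr p) powr (1/p)"
  define B where "B = (\<Sum>i\<in>I. b i powr q) powr (1/q)"
  show ?thesis
  proof (cases "A = 0 \<or> B = 0")
    case True
    then have "\<forall>i\<in>I. a i = 0 \<or> b i = 0"
      using I a b by (auto simp: A_def B_def sum_nonneg_eq_0_iff)
    then show ?thesis by (simp add: sum.neutral)
  next
    case False
    then have A0: "0 < A" and B0: "0 < B" by (auto simp: A_def B_def)
    have Ap: "A powr p = (\<Sum>i\<in>I. a i powr p)" and Bq: "B powr q = (\<Sum>i\<in>I. b i powr q)"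
      using p q by (simp_all add: A_def B_def powr_powr sum_nonneg)
    have "(\<Sum>i\<in>I. (a i / A) * (b i / B)) \<le> (\<Sum>i\<in>I. (a i / A) powr p / p + (b i / B) powr q / q)"
      using a b A0 B0 p q pq by (intro sum_mono Youngs_inequality) auto
    also have "\<dots> = (\<Sum>i\<in>I. a i powr p) / A powr p / p + (\<Sum>i\<in>I. b i powr q) / B powr q / q"
      using a b A0 B0 by (simp add: sum.distrib powr_divide sum_divide_distrib)
    also have "\<dots> = 1" using A0 B0 pq by (simp flip: Ap Bq)
    finally show ?thesis
      using A0 B0 by (simp add: sum_divide_distrib[symmetric] A_def[symmetric] B_def[symmetric] divide_le_eq)
  qed
qed

lemma powr_weighted_sum_le:
  fixes w t :: "'i \<Rightarrow> real"
  assumes I: "finite I" and w: "\<And>i. i \<in> I \<Longrightarrow> 0 \<le> w i" and t: "\<And>i. i \<in> I \<Longrightarrow> 0 \<le> t i"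
    and w1: "(\<Sum>i\<in>I. w i) \<le> 1" and r: "1 \<le> r"
  shows "(\<Sum>i\<in>I. w i * t i) powr r \<le> (\<Sum>i\<in>I. w i * t i powr r)"
proof (cases "r = 1")
  case True
  then show ?thesis using w t by (simp add: sum_nonneg)
next
  case False
  then have r1: "1 < r" using r by simp
  define r' where "r' = r / (r - 1)"
  have r'1: "1 < r'" and rr: "1/r' + 1/r = 1" using r1 by (simp_all add: r'_def field_simps)
  have "(\<Sum>i\<in>I. w i * t i) = (\<Sum>i\<in>I. w i powr (1/r') * (w i powr (1/r) * t i))"
  proof (rule sum.cong[OF refl])
    fix i assume i: "i \<in> I"
    have "w i powr (1/r') * w i powr (1/r) = w i"
      using rr w[OF i] by (cases "w i = 0") (simp_all flip: powr_add)
    then show "w i * t i = w i powr (1/r') * (w i powr (1/r) * t i)" by (simp add: mult.assoc)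
  qed
  also have "\<dots> \<le> (\<Sum>i\<in>I. (w i powr (1/r')) powr r') powr (1/r')
      * (\<Sum>i\<in>I. (w i powr (1/r) * t i) powr r) powr (1/r)"
    using w t r1 r'1 rr by (intro holder_inequality_sum[OF I]) auto
  also have "\<dots> = (\<Sum>i\<in>I. w i) powr (1/r') * (\<Sum>i\<in>I. w i * t i powr r) powr (1/r)"
    using w t r1 r'1 by (simp add: powr_powr powr_mult)
  also have "\<dots> \<le> 1 * (\<Sum>i\<in>I. w i * t i powr r) powr (1/r)"
    using w w1 r'1 by (intro mult_right_mono powr_le1) (auto simp: sum_nonneg)
  finally have "(\<Sum>i\<in>I. w i * t i) powr r \<le> ((\<Sum>i\<in>I. w i * t i powr r) powr (1/r)) powr r"
    using w t r1 by (intro powr_mono2) (auto simp: sum_nonneg)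
  also have "\<dots> = (\<Sum>i\<in>I. w i * t i powr r)"
    using w t r1 by (simp add: powr_powr sum_nonneg)
  finally show ?thesis .
qed

lemma sqrt_powr: "0 \<le> x \<Longrightarrow> sqrt x powr q = x powr (q/2)"
  by (simp add: powr_half_sqrt[symmetric] powr_powr)

lemma power2_powr_half:
  assumes "0 \<le> (t::real)" shows "(t^2) powr (q/2) = t powr q"
proof (cases "t = 0")
  case False
  then have "t^2 = t powr 2" using assms by (simp add: powr_realpow)
  then show ?thesis by (simp add: powr_powr)
qed simp

lemma conjugate_exponent_gt_1: "1 < (p::real) \<Longrightarrow> 1 < p / (p - 1)"
  by (simp add: less_divide_eq)

lemma conjugate_exponents_sum: "1 < (p::real) \<Longrightarrow> 1/p + 1/(p / (p - 1)) = 1"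
  by (simp add: field_simps)

lemma holder_doubly_substochastic:
  fixes \<sigma> :: "'i \<Rightarrow> real" and \<tau> :: "'k \<Rightarrow> real"
  assumes I: "finite I" and K: "finite K"
    and \<sigma>: "\<And>i. i \<in> I \<Longrightarrow> 0 \<le> \<sigma> i" and \<tau>: "\<And>k. k \<in> K \<Longrightarrow> 0 \<le> \<tau> k"
    and M: "\<And>i k. i \<in> I \<Longrightarrow> k \<in> K \<Longrightarrow> 0 \<le> M i k"
    and rows: "\<And>i. i \<in> I \<Longrightarrow> (\<Sum>k\<in>K. M i k) \<le> 1" and cols: "\<And>k. k \<in> K \<Longrightarrow> (\<Sum>i\<in>I. M i k) \<le> 1"
    and p1: "1 < p" and p2: "p \<le> 2"
  shows "(\<Sum>i\<in>I. \<sigma> i * sqrt (\<Sum>k\<in>K. M i k * (\<tau> k)^2))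
     \<le> (\<Sum>i\<in>I. \<sigma> i powr p) powr (1/p) * (\<Sum>k\<in>K. \<tau> k powr (p / (p - 1))) powr (1 / (p / (p - 1)))"
proof -
  define q where "q = p / (p - 1)"
  define \<rho> where "\<rho> i = sqrt (\<Sum>k\<in>K. M i k * (\<tau> k)^2)" for i
  have inner: "0 \<le> (\<Sum>k\<in>K. M i k * (\<tau> k)^2)" if "i \<in> I" for i
    using M that by (intro sum_nonneg) auto
  have q1: "1 < q" and pq: "1/p + 1/q = 1"
    unfolding q_def using p1 by (rule conjugate_exponent_gt_1, rule conjugate_exponents_sum)
  have q2: "2 \<le> q" unfolding q_def using p1 p2 by (simp add: le_divide_eq)
  have "(\<Sum>i\<in>I. \<rho> i powr q) \<le> (\<Sum>i\<in>I. \<Sum>k\<in>K. M i k * \<tau> k powr q)"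
  proof (rule sum_mono)
    fix i assume i: "i \<in> I"
    have "\<rho> i powr q = (\<Sum>k\<in>K. M i k * (\<tau> k)^2) powr (q/2)"
      unfolding \<rho>_def using inner[OF i] by (rule sqrt_powr)
    also have "\<dots> \<le> (\<Sum>k\<in>K. M i k * ((\<tau> k)^2) powr (q/2))"
      using M i rows q2 by (intro powr_weighted_sum_le[OF K]) auto
    also have "\<dots> = (\<Sum>k\<in>K. M i k * \<tau> k powr q)"
      using \<tau> by (simp add: power2_powr_half)
    finally show "\<rho> i powr q \<le> (\<Sum>k\<in>K. M i k * \<tau> k powr q)" .
  qed
  also have "\<dots> = (\<Sum>k\<in>K. (\<Sum>i\<in>I. M i k) * \<tau> k powr q)"
    by (subst sum.swap) (simp add: sum_distrib_right)
  also have "\<dots> \<le> (\<Sum>k\<in>K. \<tau> k powr q)"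
    using cols mult_right_mono[of _ 1] by (intro sum_mono) fastforce
  finally have \<rho>\<tau>: "(\<Sum>i\<in>I. \<rho> i powr q) powr (1/q) \<le> (\<Sum>k\<in>K. \<tau> k powr q) powr (1/q)"
    using q1 by (intro powr_mono2) (auto intro: sum_nonneg)
  have "(\<Sum>i\<in>I. \<sigma> i * \<rho> i) \<le> (\<Sum>i\<in>I. \<sigma> i powr p) powr (1/p) * (\<Sum>i\<in>I. \<rho> i powr q) powr (1/q)"
    using \<sigma> inner p1 q1 pq by (intro holder_inequality_sum[OF I]) (auto simp: \<rho>_def)
  also have "\<dots> \<le> (\<Sum>i\<in>I. \<sigma> i powr p) powr (1/p) * (\<Sum>k\<in>K. \<tau> k powr q) powr (1/q)"
    using \<rho>\<tau> by (rule mult_left_mono) simp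
  finally show ?thesis unfolding \<rho>_def q_def .
qed

lemma bound_row_substochastic_Max:
  fixes \<sigma> :: "'i \<Rightarrow> real" and \<tau> :: "'k \<Rightarrow> real"
  assumes K: "finite K" and \<sigma>: "\<And>i. i \<in> I \<Longrightarrow> 0 \<le> \<sigma> i" and \<tau>: "\<And>k. k \<in> K \<Longrightarrow> 0 \<le> \<tau> k"
    and M: "\<And>i k. i \<in> I \<Longrightarrow> k \<in> K \<Longrightarrow> 0 \<le> M i k"
    and rows: "\<And>i. i \<in> I \<Longrightarrow> (\<Sum>k\<in>K. M i k) \<le> 1"
  shows "(\<Sum>i\<in>I. \<sigma> i * sqrt (\<Sum>k\<in>K. M i k * (\<tau> k)^2)) \<le> (\<Sum>i\<in>I. \<sigma> i) * Max (insert 0 (\<tau> ` K))"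
proof -
  define T where "T = Max (insert 0 (\<tau> ` K))"
  have T0: "0 \<le> T" and T: "\<And>k. k \<in> K \<Longrightarrow> \<tau> k \<le> T"
    using K by (auto simp: T_def)
  have "(\<Sum>i\<in>I. \<sigma> i * sqrt (\<Sum>k\<in>K. M i k * (\<tau> k)^2)) \<le> (\<Sum>i\<in>I. \<sigma> i * T)"
  proof (intro sum_mono mult_left_mono)
    fix i assume i: "i \<in> I"
    have "(\<Sum>k\<in>K. M i k * (\<tau> k)^2) \<le> (\<Sum>k\<in>K. M i k * T^2)"
      using M i T \<tau> by (intro sum_mono mult_left_mono power_mono) auto
    also have "\<dots> \<le> T^2"
      using rows[OF i] mult_right_mono[of _ 1 "T^2"] by (simp add: sum_distrib_right[symmetric])
    finally show "sqrt (\<Sum>k\<in>K. M i k * (\<tau> k)^2) \<le> T"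
      using real_sqrt_le_mono T0 by fastforce
  qed (use \<sigma> in auto)
  then show ?thesis unfolding T_def by (simp add: sum_distrib_right)
qed

section \<open>Holder's inequality for Schatten norms\<close>

definition frob_inner :: "complex mat \<Rightarrow> complex mat \<Rightarrow> complex" where
  "frob_inner X Y = (\<Sum>a<dim_row X. \<Sum>b<dim_col X. cnj (X $$ (a,b)) * Y $$ (a,b))"

definition conj_exponent :: "real \<Rightarrow> ereal" where
  "conj_exponent p = (if p = 1 then \<infinity> else ereal (p / (p - 1)))"

lemma cauchy_schwarz_complex_sum:
  fixes x y :: "'i \<Rightarrow> complex"
  assumes "finite I"
  shows "cmod (\<Sum>a\<in>I. cnj (x a) * y a) \<le> sqrt (\<Sum>a\<in>I. (cmod (x a))^2) * sqrt (\<Sum>a\<in>I. (cmod (y a))^2)"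
proof -
  have "cmod (\<Sum>a\<in>I. cnj (x a) * y a) \<le> (\<Sum>a\<in>I. cmod (x a) * cmod (y a))"
    by (rule order_trans[OF norm_sum]) (simp add: norm_mult)
  also have "\<dots> \<le> (\<Sum>a\<in>I. cmod (x a) powr 2) powr (1/2) * (\<Sum>a\<in>I. cmod (y a) powr 2) powr (1/2)"
    by (rule holder_inequality_sum[OF assms]) auto
  also have "\<dots> = sqrt (\<Sum>a\<in>I. (cmod (x a))^2) * sqrt (\<Sum>a\<in>I. (cmod (y a))^2)"
    by (simp add: powr_half_sqrt sum_nonneg)
  finally show ?thesis .
qed

lemma frob_inner_le_col_norms:
  assumes "X \<in> carrier_mat m n" "Y \<in> carrier_mat m n"
  shows "cmod (frob_inner X Y) \<le> (\<Sum>i<n. col_norm X i * col_norm Y i)"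
proof -
  have "frob_inner X Y = (\<Sum>i<n. \<Sum>a<m. cnj (X $$ (a,i)) * Y $$ (a,i))"
    using assms unfolding frob_inner_def by (simp add: sum.swap[of _ "{..<m}"])
  then have "cmod (frob_inner X Y) \<le> (\<Sum>i<n. cmod (\<Sum>a<m. cnj (X $$ (a,i)) * Y $$ (a,i)))"
    by (simp add: norm_sum)
  also have "\<dots> \<le> (\<Sum>i<n. col_norm X i * col_norm Y i)"
    using assms by (intro sum_mono) (simp add: col_norm_def cauchy_schwarz_complex_sum)
  finally show ?thesis .
qed

lemma frob_inner_mult_unitary:
  assumes X: "X \<in> carrier_mat m n" and Y: "Y \<in> carrier_mat m n" and U: "unitary n U"
  shows "frob_inner (X * U) (Y * U) = frob_inner X Y"
proof -
  note Uc = unitaryD(1)[OF U]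
  have "(\<Sum>i<n. cnj ((X * U) $$ (a,i)) * (Y * U) $$ (a,i)) = (\<Sum>b<n. cnj (X $$ (a,b)) * Y $$ (a,b))"
    if a: "a < m" for a
  proof -
    have "(\<Sum>i<n. cnj ((X * U) $$ (a,i)) * (Y * U) $$ (a,i))
        = (\<Sum>i<n. (\<Sum>b<n. cnj (X $$ (a,b)) * cnj (U $$ (b,i))) * (\<Sum>c<n. Y $$ (a,c) * U $$ (c,i)))"
      using a X Y Uc by (intro sum.cong refl) (simp add: index_mult_mat_sum[of _ m n _ n] del: index_mult_mat)
    also have "\<dots> = (\<Sum>i<n. \<Sum>b<n. \<Sum>c<n. cnj (X $$ (a,b)) * Y $$ (a,c) * (U $$ (c,i) * cnj (U $$ (b,i))))"
      by (simp only: sum_product) (simp add: ac_simps)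
    also have "\<dots> = (\<Sum>b<n. \<Sum>c<n. \<Sum>i<n. cnj (X $$ (a,b)) * Y $$ (a,c) * (U $$ (c,i) * cnj (U $$ (b,i))))"
      by (subst sum.swap, rule sum.cong[OF refl], subst sum.swap, rule refl)
    also have "\<dots> = (\<Sum>b<n. \<Sum>c<n. cnj (X $$ (a,b)) * Y $$ (a,c) * (\<Sum>i<n. U $$ (c,i) * cnj (U $$ (b,i))))"
      by (simp add: sum_distrib_left)
    also have "\<dots> = (\<Sum>b<n. cnj (X $$ (a,b)) * Y $$ (a,b))"
      by (simp add: unitary_rows_orthonormal[OF U] if_distrib[of "\<lambda>x. _ * x"] cong: if_cong)
    finally show ?thesis .
  qed
  then show ?thesis using X Y Uc by (simp add: frob_inner_def)
qed

lemma unitary_abs_sq_sums: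
  assumes R: "unitary n R" and i: "i < n"
  shows "(\<Sum>k<n. (cmod (R $$ (k,i)))^2) = 1" "(\<Sum>k<n. (cmod (R $$ (i,k)))^2) = 1"
proof -
  have "complex_of_real (\<Sum>k<n. (cmod (R $$ (k,i)))^2) = (\<Sum>k<n. cnj (R $$ (k,i)) * R $$ (k,i))"
    unfolding of_real_sum complex_norm_square by (simp add: mult.commute)
  then show "(\<Sum>k<n. (cmod (R $$ (k,i)))^2) = 1"
    using unitary_cols_orthonormal[OF R i i] by (metis of_real_eq_1_iff)
  have "complex_of_real (\<Sum>k<n. (cmod (R $$ (i,k)))^2) = (\<Sum>k<n. R $$ (i,k) * cnj (R $$ (i,k)))"
    unfolding of_real_sum complex_norm_square ..
  then show "(\<Sum>k<n. (cmod (R $$ (i,k)))^2) = 1"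
    using unitary_rows_orthonormal[OF R i i] by (metis of_real_eq_1_iff)
qed

lemma col_norm_mult_diagonal_gram:
  assumes Q: "Q \<in> carrier_mat m n" and R: "R \<in> carrier_mat n n"
    and D: "diagonal_mat (adj Q * Q)" and i: "i < n"
  shows "col_norm (Q * R) i = sqrt (\<Sum>k<n. (cmod (R $$ (k,i)))^2 * (col_norm Q k)^2)"
proof -
  have G: "adj Q * Q \<in> carrier_mat n n" using Q by (auto intro: adj_carrierI)
  have "complex_of_real ((col_norm (Q * R) i)^2) = (adj R * (adj Q * Q) * R) $$ (i,i)"
    using index_gram_diag[of "Q * R" m n i] Q R i by (simp add: gram_mult_right)
  also have "\<dots> = (\<Sum>a<n. \<Sum>b<n. cnj (R $$ (a,i)) * (adj Q * Q) $$ (a,b) * R $$ (b,i))"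
    by (rule index_adj_mult_mult[OF R G R i i])
  also have "\<dots> = (\<Sum>a<n. cnj (R $$ (a,i)) * (adj Q * Q) $$ (a,a) * R $$ (a,i))"
  proof (intro sum.cong refl)
    fix a assume "a \<in> {..<n}"
    moreover have "(adj Q * Q) $$ (a,b) = 0" if "a < n" "b < n" "a \<noteq> b" for b
      using D G that unfolding diagonal_mat_def by (metis carrier_matD)
    ultimately show "(\<Sum>b<n. cnj (R $$ (a,i)) * (adj Q * Q) $$ (a,b) * R $$ (b,i))
        = cnj (R $$ (a,i)) * (adj Q * Q) $$ (a,a) * R $$ (a,i)"
      by (subst sum.remove[of _ a]) auto
  qed
  also have "\<dots> = (\<Sum>a<n. complex_of_real ((cmod (R $$ (a,i)))^2 * (col_norm Q a)^2))"
  proof (intro sum.cong refl)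
    fix a assume "a \<in> {..<n}"
    then show "cnj (R $$ (a,i)) * (adj Q * Q) $$ (a,a) * R $$ (a,i)
        = complex_of_real ((cmod (R $$ (a,i)))^2 * (col_norm Q a)^2)"
      using index_gram_diag[OF Q, of a] by (simp only: of_real_mult complex_norm_square) (simp add: ac_simps)
  qed
  also have "\<dots> = complex_of_real (\<Sum>a<n. (cmod (R $$ (a,i)))^2 * (col_norm Q a)^2)"
    by (simp only: of_real_sum)
  finally have "(col_norm (Q * R) i)^2 = (\<Sum>a<n. (cmod (R $$ (a,i)))^2 * (col_norm Q a)^2)"
    by (simp only: of_real_eq_iff)
  then show ?thesis using col_norm_nonneg by (metis real_sqrt_unique)
qed

lemma frob_inner_le_mixed_col_norms:
  assumes X: "X \<in> carrier_mat m n" and Y: "Y \<in> carrier_mat m n"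
    and U: "unitary n U" and W: "unitary n W" and D: "diagonal_mat (adj (Y * W) * (Y * W))"
  shows "cmod (frob_inner X Y) \<le> (\<Sum>i<n. col_norm (X * U) i
      * sqrt (\<Sum>k<n. (cmod ((adj W * U) $$ (k,i)))^2 * (col_norm (Y * W) k)^2))"
proof -
  note Uc = unitaryD(1)[OF U] and Wc = unitaryD(1)[OF W]
  have R: "adj W * U \<in> carrier_mat n n" using Uc Wc by (auto intro: adj_carrierI)
  have "(Y * W) * (adj W * U) = Y * (W * (adj W * U))"
    by (rule assoc_mult_mat[OF Y Wc R])
  also have "W * (adj W * U) = (W * adj W) * U"
    using Wc Uc by (intro assoc_mult_mat[symmetric]) (auto intro: adj_carrierI)
  finally have YU: "Y * U = (Y * W) * (adj W * U)"
    using Uc by (simp add: unitaryD(3)[OF W])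
  have YW: "Y * W \<in> carrier_mat m n" using Y Wc by simp
  have cn: "col_norm (Y * U) i = sqrt (\<Sum>k<n. (cmod ((adj W * U) $$ (k,i)))^2 * (col_norm (Y * W) k)^2)"
    if "i < n" for i
    unfolding YU by (rule col_norm_mult_diagonal_gram[OF YW R D that])
  have "cmod (frob_inner X Y) = cmod (frob_inner (X * U) (Y * U))"
    by (simp add: frob_inner_mult_unitary[OF X Y U])
  also have "\<dots> \<le> (\<Sum>i<n. col_norm (X * U) i * col_norm (Y * U) i)"
    using X Y Uc by (intro frob_inner_le_col_norms) auto
  also have "\<dots> = (\<Sum>i<n. col_norm (X * U) i
      * sqrt (\<Sum>k<n. (cmod ((adj W * U) $$ (k,i)))^2 * (col_norm (Y * W) k)^2))"
    by (simp add: cn)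
  finally show ?thesis .
qed

theorem schatten_holder:
  assumes X: "X \<in> carrier_mat m n" and Y: "Y \<in> carrier_mat m n" and p: "1 \<le> p" "p \<le> 2"
  shows "cmod (frob_inner X Y) \<le> schatten (ereal p) X * schatten (conj_exponent p) Y"
proof -
  obtain U where U: "unitary n U" and DU: "diagonal_mat (adj (X * U) * (X * U))"
    using exists_unitary_orthogonal_cols[OF X] by blast
  obtain W where W: "unitary n W" and DW: "diagonal_mat (adj (Y * W) * (Y * W))"
    using exists_unitary_orthogonal_cols[OF Y] by blast
  define \<sigma> where "\<sigma> = col_norm (X * U)"
  define \<tau> where "\<tau> = col_norm (Y * W)"
  define M where "M i k = (cmod ((adj W * U) $$ (k,i)))^2" for i k
  have R: "unitary n (adj W * U)" by (rule unitary_mult[OF unitary_adj[OF W] U])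
  have rows: "(\<Sum>k<n. M i k) = 1" and cols: "(\<Sum>i<n. M i k) = 1" if "i < n" "k < n" for i k
    using unitary_abs_sq_sums[OF R] that by (simp_all add: M_def)
  have bound: "cmod (frob_inner X Y) \<le> (\<Sum>i<n. \<sigma> i * sqrt (\<Sum>k<n. M i k * (\<tau> k)^2))"
    unfolding \<sigma>_def \<tau>_def M_def by (rule frob_inner_le_mixed_col_norms[OF X Y U W DW])
  note sX = schatten_col_norms[OF X U DU, folded \<sigma>_def]
  note sY = schatten_col_norms[OF Y W DW, folded \<tau>_def]
  show ?thesis
  proof (cases "p = 1")
    case True
    have "(\<Sum>i<n. \<sigma> i * sqrt (\<Sum>k<n. M i k * (\<tau> k)^2)) \<le> (\<Sum>i<n. \<sigma> i) * Max (insert 0 (\<tau> ` {..<n}))"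
      using rows by (intro bound_row_substochastic_Max) (auto simp: \<sigma>_def \<tau>_def M_def col_norm_nonneg)
    also have "\<dots> = schatten (ereal p) X * schatten (conj_exponent p) Y"
      using True by (simp add: sX sY conj_exponent_def \<sigma>_def col_norm_nonneg sum_nonneg)
    finally show ?thesis using bound by linarith
  next
    case False
    have "(\<Sum>i<n. \<sigma> i * sqrt (\<Sum>k<n. M i k * (\<tau> k)^2))
        \<le> (\<Sum>i<n. \<sigma> i powr p) powr (1/p) * (\<Sum>k<n. \<tau> k powr (p / (p - 1))) powr (1 / (p / (p - 1)))"
      using rows cols False p
      by (intro holder_doubly_substochastic) (auto simp: \<sigma>_def \<tau>_def M_def col_norm_nonneg)
    also have "\<dots> = schatten (ereal p) X * schatten (conj_exponent p) Y"
      using False by (simp add: sX sY conj_exponent_def)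
    finally show ?thesis using bound by linarith
  qed
qed

section \<open>Block decomposition and compression\<close>

lemma sum_lessThan_add: "(\<Sum>b<s + (t::nat). f b) = (\<Sum>b<s. f b) + (\<Sum>j<t. f (s + j))"
  by (induction t) (simp_all add: add.assoc)

lemma sum_blocks: "(\<Sum>b<(\<Sum>k<N. w k). f b) = (\<Sum>k<N. \<Sum>j<w k. f (offs w k + j))"
proof (induction N)
  case (Suc N)
  then show ?case by (simp add: sum_lessThan_add offs_def)
qed simp

lemma block2_carrier: "block2 X m1 m2 w i k \<in> carrier_mat (if i = 0 then m1 else m2) (w k)"
  unfolding block2_def blk_def by simp

lemma frob_inner_blocks:
  assumes "X \<in> carrier_mat (m1 + m2) (\<Sum>k<N. w k)"
  shows "frob_inner X Y = (\<Sum>k<N. \<Sum>i<2. frob_inner (block2 X m1 m2 w i k) (block2 Y m1 m2 w i k))"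
proof -
  let ?f = "\<lambda>a b. cnj (X $$ (a, b)) * Y $$ (a, b)"
  have "frob_inner X Y = (\<Sum>a<m1 + m2. \<Sum>k<N. \<Sum>j<w k. ?f a (offs w k + j))"
    using assms by (simp add: frob_inner_def sum_blocks)
  also have "\<dots> = (\<Sum>k<N. (\<Sum>a<m1. \<Sum>j<w k. ?f a (offs w k + j))
      + (\<Sum>a<m2. \<Sum>j<w k. ?f (m1 + a) (offs w k + j)))"
    by (subst sum.swap) (simp add: sum_lessThan_add)
  also have "\<dots> = (\<Sum>k<N. \<Sum>i<2. frob_inner (block2 X m1 m2 w i k) (block2 Y m1 m2 w i k))"
    by (simp add: block2_def blk_def frob_inner_def numeral_2_eq_2)
  finally show ?thesis .
qed

lemma frob_inner_compr:
  "frob_inner (compr r N X m1 m2 w) (compr r' N Y m1 m2 w) =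
   complex_of_real (\<Sum>k<N. \<Sum>i<2. schatten r (block2 X m1 m2 w i k) * schatten r' (block2 Y m1 m2 w i k))"
  by (simp add: frob_inner_def compr_def sum.swap[of _ "{..<2::nat}"])

lemma schatten_nonneg: "0 \<le> schatten r X"
  by (cases r) (auto simp: schatten_def Max_ge_iff)

lemma frob_inner_le_compressions:
  assumes S: "S \<in> carrier_mat (m1 + m2) (\<Sum>k<N. w k)" and T: "T \<in> carrier_mat (m1 + m2) (\<Sum>k<N. w k)"
    and p: "1 \<le> p" "p \<le> 2"
  shows "cmod (frob_inner S T)
    \<le> schatten (ereal p) (compr (ereal p) N S m1 m2 w) * schatten (conj_exponent p) (compr (conj_exponent p) N T m1 m2 w)"
proof -
  let ?p = "ereal p" and ?q = "conj_exponent p"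
  have "cmod (frob_inner S T) \<le> (\<Sum>k<N. \<Sum>i<2. cmod (frob_inner (block2 S m1 m2 w i k) (block2 T m1 m2 w i k)))"
    unfolding frob_inner_blocks[OF S] by (rule order_trans[OF norm_sum sum_mono]) (rule norm_sum)
  also have "\<dots> \<le> (\<Sum>k<N. \<Sum>i<2. schatten ?p (block2 S m1 m2 w i k) * schatten ?q (block2 T m1 m2 w i k))"
    using p by (intro sum_mono schatten_holder[OF block2_carrier block2_carrier])
  also have "\<dots> = cmod (frob_inner (compr ?p N S m1 m2 w) (compr ?q N T m1 m2 w))"
    unfolding frob_inner_compr norm_of_real
    by (intro abs_of_nonneg[symmetric] sum_nonneg mult_nonneg_nonneg schatten_nonneg)
  also have "\<dots> \<le> schatten ?p (compr ?p N S m1 m2 w) * schatten ?q (compr ?q N T m1 m2 w)"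
    using p by (intro schatten_holder[of _ 2 N]) (simp_all add: compr_def)
  finally show ?thesis .
qed

section \<open>Norming elements for the trace duality\<close>

definition scale_cols :: "complex mat \<Rightarrow> (nat \<Rightarrow> real) \<Rightarrow> complex mat" where
  "scale_cols P g = mat (dim_row P) (dim_col P) (\<lambda>(a,i). P $$ (a,i) * complex_of_real (g i))"

lemma scale_cols_carrier: "P \<in> carrier_mat m n \<Longrightarrow> scale_cols P g \<in> carrier_mat m n"
  by (simp add: scale_cols_def)

lemma diagonal_gram_scale_cols:
  assumes P: "P \<in> carrier_mat m n" and D: "diagonal_mat (adj P * P)"
  shows "diagonal_mat (adj (scale_cols P g) * scale_cols P g)"
  unfolding diagonal_mat_def
proof (intro allI impI)
  let ?Q = "scale_cols P g"
  fix i j assume "i < dim_row (adj ?Q * ?Q)" "j < dim_col (adj ?Q * ?Q)" "i \<noteq> j"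
  then have ij: "i < n" "j < n" "i \<noteq> j" using P by (auto simp: scale_cols_def)
  have "(adj ?Q * ?Q) $$ (i,j) = complex_of_real (g i * g j) * (adj P * P) $$ (i,j)"
    using ij P scale_cols_carrier[OF P]
    by (simp add: index_mult_mat_sum[of _ n m _ n] adj_carrierI sum_distrib_left scale_cols_def ac_simps
        del: index_mult_mat)
  also have "(adj P * P) $$ (i,j) = 0"
    using D ij P unfolding diagonal_mat_def by auto
  finally show "(adj ?Q * ?Q) $$ (i,j) = 0" by simp
qed

lemma col_norm_scale_cols:
  assumes P: "P \<in> carrier_mat m n" and i: "i < n" and g: "0 \<le> g i"
  shows "col_norm (scale_cols P g) i = g i * col_norm P i"
proof -
  have "(\<Sum>a<m. (cmod (scale_cols P g $$ (a,i)))^2) = (g i)^2 * (\<Sum>a<m. (cmod (P $$ (a,i)))^2)"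
    using P i by (simp add: scale_cols_def norm_mult power_mult_distrib sum_distrib_left mult.commute)
  then show ?thesis
    using P g by (simp add: col_norm_def scale_cols_def real_sqrt_mult)
qed

lemma frob_inner_scale_cols:
  assumes P: "P \<in> carrier_mat m n"
  shows "frob_inner (scale_cols P g) P = complex_of_real (\<Sum>i<n. g i * (col_norm P i)^2)"
proof -
  have "frob_inner (scale_cols P g) P
      = (\<Sum>i<n. complex_of_real (g i) * (\<Sum>a<m. cnj (P $$ (a,i)) * P $$ (a,i)))"
    using P by (simp add: frob_inner_def scale_cols_def sum_distrib_left sum.swap[of _ "{..<m}"] ac_simps)
  then show ?thesis
    using P by (simp add: sum_col_cnj_mult[of _ m])
qed

lemma exists_scaled_col_norms:
  assumes T: "T \<in> carrier_mat m n" and V: "unitary n V" and D: "diagonal_mat (adj (T * V) * (T * V))"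
    and g: "\<And>i. i < n \<Longrightarrow> 0 \<le> g i"
  obtains S where "S \<in> carrier_mat m n" "diagonal_mat (adj (S * V) * (S * V))"
    "\<And>i. i < n \<Longrightarrow> col_norm (S * V) i = g i * col_norm (T * V) i"
    "frob_inner S T = complex_of_real (\<Sum>i<n. g i * (col_norm (T * V) i)^2)"
proof -
  note Vc = unitaryD(1)[OF V]
  have P: "T * V \<in> carrier_mat m n" using T Vc by simp
  define Q where "Q = scale_cols (T * V) g"
  define S where "S = Q * adj V"
  have Q: "Q \<in> carrier_mat m n" unfolding Q_def by (rule scale_cols_carrier[OF P])
  then have S: "S \<in> carrier_mat m n" using Vc by (simp add: S_def adj_carrierI)
  have "S * V = Q * (adj V * V)"
    using Q Vc by (simp add: S_def assoc_mult_mat[of _ m n _ n _ n] adj_carrierI)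
  then have SV: "S * V = Q" using Q by (simp add: unitaryD(2)[OF V])
  have "frob_inner S T = frob_inner Q (T * V)"
    using frob_inner_mult_unitary[OF S T V] by (simp add: SV)
  then show thesis
    using that[OF S] diagonal_gram_scale_cols[OF P D] col_norm_scale_cols[OF P _ g]
      frob_inner_scale_cols[OF P] by (simp add: SV Q_def)
qed

lemma exists_norming_dual_1:
  assumes T: "T \<in> carrier_mat m n"
  shows "\<exists>S \<in> carrier_mat m n. cmod (frob_inner S T) = schatten \<infinity> T \<and> schatten (ereal 1) S \<le> 1"
proof -
  obtain V where V: "unitary n V" and D: "diagonal_mat (adj (T * V) * (T * V))"
    using exists_unitary_orthogonal_cols[OF T] by blast
  define \<sigma> where "\<sigma> = col_norm (T * V)"
  define smax where "smax = Max (insert 0 (\<sigma> ` {..<n}))"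
  have smax0: "0 \<le> smax" and le_smax: "\<And>i. i < n \<Longrightarrow> \<sigma> i \<le> smax"
    by (auto simp: smax_def)
  have "smax \<in> insert 0 (\<sigma> ` {..<n})" unfolding smax_def by (rule Max_in) simp_all
  then obtain i0 where i0: "smax = 0 \<or> (i0 < n \<and> \<sigma> i0 = smax)" by auto
  txt \<open>Pair \<open>T\<close> with the rank-one partial isometry along a top singular direction (or with 0).\<close>
  define g where "g i = (if i = i0 then 1 / smax else 0)" for i
  have g0: "\<And>i. i < n \<Longrightarrow> 0 \<le> g i" using smax0 by (simp add: g_def)
  obtain S where S: "S \<in> carrier_mat m n" and DS: "diagonal_mat (adj (S * V) * (S * V))"
    and cS: "\<And>i. i < n \<Longrightarrow> col_norm (S * V) i = g i * \<sigma> i"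
    and fS: "frob_inner S T = complex_of_real (\<Sum>i<n. g i * (\<sigma> i)^2)"
    using exists_scaled_col_norms[OF T V D, where g = g, OF g0, folded \<sigma>_def] by blast
  have "(\<Sum>i<n. g i * (\<sigma> i)^2) = (if i0 < n then (\<sigma> i0)^2 / smax else 0)"
    by (simp add: g_def if_distrib[of "\<lambda>x. x * _"] cong: if_cong)
  also have "\<dots> = smax"
    using i0 by (auto simp: power2_eq_square)
  finally have "cmod (frob_inner S T) = schatten \<infinity> T"
    using fS smax0 schatten_col_norms(2)[OF T V D] by (simp add: smax_def \<sigma>_def)
  moreover have "schatten (ereal 1) S = (\<Sum>i<n. g i * \<sigma> i)"
  proof -
    have "(\<Sum>i<n. \<bar>g i * \<sigma> i\<bar>) = (\<Sum>i<n. g i * \<sigma> i)"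
      using g0 by (intro sum.cong refl) (simp add: \<sigma>_def col_norm_nonneg)
    moreover have "0 \<le> (\<Sum>i<n. g i * \<sigma> i)"
      using g0 by (intro sum_nonneg) (simp add: \<sigma>_def col_norm_nonneg)
    ultimately show ?thesis using schatten_col_norms(1)[OF S V DS, of 1] cS by (simp add: \<sigma>_def)
  qed
  moreover have "(\<Sum>i<n. g i * \<sigma> i) = (if i0 < n then \<sigma> i0 / smax else 0)"
    by (simp add: g_def if_distrib[of "\<lambda>x. x * _"] cong: if_cong)
  moreover have "\<dots> \<le> 1"
    using i0 le_smax smax0 by auto
  ultimately show ?thesis using S by auto
qed

lemma powr_minus_two_mult_power2:
  assumes "0 \<le> (x::real)" shows "x powr (r - 2) * x^2 = x powr r"
proof (cases "x = 0")
  case False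
  then have "x^2 = x powr 2" using assms by (simp add: powr_realpow)
  then show ?thesis by (simp add: powr_add[symmetric])
qed simp

lemma powr_minus_two_mult:
  assumes "0 \<le> (x::real)" shows "x powr (r - 2) * x = x powr (r - 1)"
proof -
  have "x powr (r - 1) = x powr (r - 2 + 1)" by simp
  also have "\<dots> = x powr (r - 2) * x" unfolding powr_add using assms by simp
  finally show ?thesis ..
qed

lemma dual_weights_powr:
  fixes \<sigma> :: "'i \<Rightarrow> real"
  assumes \<sigma>: "\<And>i. 0 \<le> \<sigma> i" and p: "1 < p"
    and r_eq: "r = p / (p - 1)" and K_eq: "K = (\<Sum>i\<in>I. \<sigma> i powr r)"
  shows "(\<Sum>i\<in>I. \<sigma> i powr (r - 2) / K powr (1/p) * (\<sigma> i)^2) = K powr (1/r)"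
    and "(\<Sum>i\<in>I. (\<sigma> i powr (r - 2) / K powr (1/p) * \<sigma> i) powr p) powr (1/p) \<le> 1"
proof -
  have K0: "0 \<le> K" by (simp add: K_eq sum_nonneg)
  have pr: "1/p + 1/r = 1" unfolding r_eq by (rule conjugate_exponents_sum[OF p])
  have rp: "(r - 1) * p = r" using p by (simp add: r_eq field_simps)
  have "(\<Sum>i\<in>I. \<sigma> i powr (r - 2) / K powr (1/p) * (\<sigma> i)^2) = K / K powr (1/p)"
    by (simp add: K_eq sum_divide_distrib powr_minus_two_mult_power2 \<sigma>)
  also have "\<dots> = K powr (1/r)"
  proof (cases "K = 0")
    case False
    then have "K powr (1/p) * K powr (1/r) = K" using K0 pr by (simp flip: powr_add)
    then show ?thesis using False K0 by (simp add: field_simps)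
  qed simp
  finally show "(\<Sum>i\<in>I. \<sigma> i powr (r - 2) / K powr (1/p) * (\<sigma> i)^2) = K powr (1/r)" .
  have "(\<sigma> i powr (r - 2) / K powr (1/p) * \<sigma> i) powr p = \<sigma> i powr r / K" for i
  proof -
    have "(\<sigma> i powr (r - 1) / K powr (1/p)) powr p = \<sigma> i powr r / K"
      using K0 p \<sigma>[of i] by (simp add: powr_divide powr_powr rp)
    then show ?thesis
      unfolding times_divide_eq_left powr_minus_two_mult[OF \<sigma>] .
  qed
  then have "(\<Sum>i\<in>I. (\<sigma> i powr (r - 2) / K powr (1/p) * \<sigma> i) powr p) = (\<Sum>i\<in>I. \<sigma> i powr r / K)"
    by simp
  also have "\<dots> = K / K"
    unfolding sum_divide_distrib[symmetric] K_eq ..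
  finally have "(\<Sum>i\<in>I. (\<sigma> i powr (r - 2) / K powr (1/p) * \<sigma> i) powr p) = K / K" .
  then show "(\<Sum>i\<in>I. (\<sigma> i powr (r - 2) / K powr (1/p) * \<sigma> i) powr p) powr (1/p) \<le> 1"
    by (cases "K = 0") simp_all
qed

lemma exists_norming_dual_powr:
  assumes T: "T \<in> carrier_mat m n" and p: "1 < p"
  shows "\<exists>S \<in> carrier_mat m n. cmod (frob_inner S T) = schatten (ereal (p / (p - 1))) T
    \<and> schatten (ereal p) S \<le> 1"
proof -
  obtain V where V: "unitary n V" and D: "diagonal_mat (adj (T * V) * (T * V))"
    using exists_unitary_orthogonal_cols[OF T] by blast
  define r where "r = p / (p - 1)"
  define \<sigma> where "\<sigma> = col_norm (T * V)"
  define K where "K = (\<Sum>i<n. \<sigma> i powr r)"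
  have \<sigma>0: "0 \<le> \<sigma> i" for i by (simp add: \<sigma>_def col_norm_nonneg)
  txt \<open>The dual weights \<open>\<sigma>\<^sup>r\<^sup>-\<^sup>1\<close>, normalized in \<open>\<ell>\<^sup>p\<close>.\<close>
  define g where "g i = \<sigma> i powr (r - 2) / K powr (1/p)" for i
  have g0: "\<And>i. i < n \<Longrightarrow> 0 \<le> g i" by (simp add: g_def)
  obtain S where S: "S \<in> carrier_mat m n" and DS: "diagonal_mat (adj (S * V) * (S * V))"
    and cS: "\<And>i. i < n \<Longrightarrow> col_norm (S * V) i = g i * \<sigma> i"
    and fS: "frob_inner S T = complex_of_real (\<Sum>i<n. g i * (\<sigma> i)^2)"
    using exists_scaled_col_norms[OF T V D, where g = g, OF g0, folded \<sigma>_def] by blast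
  note weights = dual_weights_powr[OF \<sigma>0 p r_def K_def, folded g_def]
  have "cmod (frob_inner S T) = K powr (1/r)"
    unfolding fS weights(1) by simp
  also have "\<dots> = schatten (ereal r) T"
    by (simp add: schatten_col_norms(1)[OF T V D] K_def \<sigma>_def)
  finally have "cmod (frob_inner S T) = schatten (ereal r) T" .
  moreover have "schatten (ereal p) S \<le> 1"
    using weights(2) by (simp add: schatten_col_norms(1)[OF S V DS] cS)
  ultimately show ?thesis using S by (auto simp: r_def)
qed

lemma exists_norming_dual:
  assumes "T \<in> carrier_mat m n" "1 \<le> p"
  shows "\<exists>S \<in> carrier_mat m n. cmod (frob_inner S T) = schatten (conj_exponent p) T \<and> schatten (ereal p) S \<le> 1"
  using exists_norming_dual_1[OF assms(1)] exists_norming_dual_powr[OF assms(1)] assms(2)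
  by (cases "p = 1") (auto simp: conj_exponent_def)

theorem mainTheorem1:
  fixes p :: real and q :: ereal and N :: nat
  assumes "1 \<le> p" and "p \<le> 2"
    and "q = (if p = 1 then \<infinity> else ereal (p / (p - 1)))"
    and "N \<ge> 1"
    and hyp: "\<forall>S m1 m2 w. is_block2 N S m1 m2 w \<longrightarrow>
               schatten (ereal p) S \<ge> schatten (ereal p) (compr (ereal p) N S m1 m2 w)"
  shows "\<forall>T m1 m2 w. is_block2 N T m1 m2 w \<longrightarrow>
               schatten q T \<le> schatten q (compr q N T m1 m2 w)"
proof (intro allI impI)
  fix T m1 m2 w assume "is_block2 N T m1 m2 w"
  then have T: "T \<in> carrier_mat (m1 + m2) (\<Sum>k<N. w k)"
    and blocks: "\<And>S. S \<in> carrier_mat (m1 + m2) (\<Sum>k<N. w k) \<Longrightarrow> is_block2 N S m1 m2 w"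
    by (auto simp: is_block2_def)
  have q: "q = conj_exponent p" using assms(3) by (simp add: conj_exponent_def)
  obtain S where S: "S \<in> carrier_mat (m1 + m2) (\<Sum>k<N. w k)"
    and norming: "cmod (frob_inner S T) = schatten q T" and S1: "schatten (ereal p) S \<le> 1"
    using exists_norming_dual[OF T \<open>1 \<le> p\<close>] q by blast
  have "schatten q T \<le> schatten (ereal p) (compr (ereal p) N S m1 m2 w) * schatten q (compr q N T m1 m2 w)"
    using frob_inner_le_compressions[OF S T \<open>1 \<le> p\<close> \<open>p \<le> 2\<close>] norming q by simp
  also have "\<dots> \<le> schatten (ereal p) S * schatten q (compr q N T m1 m2 w)"
    using hyp blocks[OF S] by (intro mult_right_mono schatten_nonneg) auto
  also have "\<dots> \<le> schatten q (compr q N T m1 m2 w)"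
    using S1 by (intro mult_left_le_one_le schatten_nonneg)
  finally show "schatten q T \<le> schatten q (compr q N T m1 m2 w)" .
qed

end
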